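(* Let $c>0$, $f>0$, $d\in\mathbb R$ and $n\ge 1$. Let $\eta$ be a real function that is continuously differentiable on a neighbourhood of $0$ in $H^2$, with $\eta$ and $\partial_t\eta$ bounded there. Define, for $v>0$, $$\chi(t,v)=\frac{c}{v}\exp\!\Big(-\frac{f}{v^{2}}\,(t+d\,v^n)^2\Big)+\eta(t,v),$$ and $\chi(t,0)=\eta(t,0)$ for $t\neq0$. Then there exist $\omega>0$ and a sufficiently small $\mathcal U$ such that $\chi\in\Psi_1^\omega(\mathcal U)$, where the function $\nu(t)$ in condition 2 of the definition can be chosen such that $\nu(t)^{-1}\to 0$ as $|t|\to 0$.
   Context: Let $H^2=\{(t,v)\in\mathbb R^2: v\ge 0\}$. $\mathcal U\subseteq H^2$ denotes the intersection of an open neighbourhood of $0\in\mathbb R^2$ with $H^2$, and $\mathcal U^*=\mathcal U\setminus\{0\}$. For $\omega>0$, $\Psi_1^\omega(\mathcal U)$ denotes the set of continuous real-valued functions $\chi$ on $\mathcal U^*$ such that: 1. $\chi$ is continuously differentiable on $\{(t,v)\in\mathcal U^*: v\neq 0\}$; 2. there is a function $t\mapsto\nu(t)>0$ (defined for $t\neq 0$) such that $|\chi(t,v)|\le\omega$ for all $(t,v)\in\mathcal U^*$ with $0\le v<|t|/\nu(t)$; 3. there are positive constants $c,K_1,K_2,\epsilon$ such that for all $(t,v)\in\mathcal U^*$ with $v\neq 0$: $\left|\chi(0,v)-\frac{c}{v}\right|<\frac{K_1}{v^{1-\epsilon}}$ (whenever $(0,v)\in\mathcal U^*$) and $\left|\frac{\partial}{\partial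 t}\chi(t,v)\right|<\frac{K_2}{v^2}$. (The constant $c$ in condition 3 is any positive constant, not necessarily the $c$ in the formula for $\chi$. Interpretation: $v=L^{-D}$, $t=(T-T_c(\infty))/T_c(\infty)$ measures the distance to the infinite-volume transition point, and the peak location converges as $|T_c(L)-T_c(\infty)|\le C L^{-m}$ with $m=nD\ge D$.) *)

theory Defs
  imports "HOL-Analysis.Analysis"
begin

definition H2 :: "(real \<times> real) set" where
  "H2 = {p. snd p \<ge> 0}"

text \<open>The class Psi_1^omega(U) with the function nu of condition 2 made explicit.
  Condition 1 (continuous differentiability on the part of U* with v \<noteq> 0) is
  expressed through the two partial derivatives Dt, Dv, which must be continuous;
  condition 3 uses the t-partial derivative Dt.\<close>
definition Psi1_nu ::
    "real \<Rightarrow> (real \<times> real) set \<Rightarrow> (real \<Rightarrow> real) \<Rightarrow> (real \<times> real \<Rightarrow> real) \<Rightarrow> bool" where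
  "Psi1_nu \<omega> U \<nu> g \<longleftrightarrow>
     (let Us = U - {(0,0)}; Ov = {p \<in> Us. snd p \<noteq> 0} in
      continuous_on Us g \<and>
      (\<exists>Dt Dv. (\<forall>p\<in>Ov. (g has_derivative (\<lambda>h. fst h * Dt p + snd h * Dv p)) (at p)) \<and>
              continuous_on Ov Dt \<and> continuous_on Ov Dv \<and>
              (\<exists>c K1 K2 \<epsilon>. c > 0 \<and> K1 > 0 \<and> K2 > 0 \<and> \<epsilon> > 0 \<and>
                 (\<forall>v. (0, v) \<in> Us \<and> v \<noteq> 0 \<longrightarrow> \<bar>g (0, v) - c / v\<bar> < K1 / v powr (1 - \<epsilon>)) \<and>
                 (\<forall>t v. (t, v) \<in> Us \<and> v \<noteq> 0 \<longrightarrow> \<bar>Dt (t, v)\<bar> < K2 / v\<^sup>2))) \<and>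
      (\<forall>t. t \<noteq> 0 \<longrightarrow> \<nu> t > 0) \<and>
      (\<forall>t v. (t, v) \<in> Us \<and> t \<noteq> 0 \<and> 0 \<le> v \<and> v < \<bar>t\<bar> / \<nu> t \<longrightarrow> \<bar>g (t, v)\<bar> \<le> \<omega>))"

definition Psi1 :: "real \<Rightarrow> (real \<times> real) set \<Rightarrow> (real \<times> real \<Rightarrow> real) \<Rightarrow> bool" where
  "Psi1 \<omega> U g \<longleftrightarrow> (\<exists>\<nu>. Psi1_nu \<omega> U \<nu> g)"

text \<open>The function chi of the lemma (values for v < 0 are irrelevant).\<close>
definition chi_fun ::
    "real \<Rightarrow> real \<Rightarrow> real \<Rightarrow> real \<Rightarrow> (real \<times> real \<Rightarrow> real) \<Rightarrow> real \<times> real \<Rightarrow> real" where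
  "chi_fun c f d n \<eta> p =
     (let t = fst p; v = snd p in
      if v > 0 then c / v * exp (- (f / v\<^sup>2) * (t + d * v powr n)\<^sup>2) + \<eta> (t, v)
      else \<eta> (t, v))"

end

theory Submission
  imports Defs
begin

text \<open>
  Write chi = G + eta, where G is the Gaussian peak c/v exp(-f (t + d v^n)^2 / v^2), extended
  by 0 to v = 0. Away from the axis t = 0 the peak is small: exp(-s) <= 1/s gives
  G(t,v) <= c v / (f (|t| - |d| v)^2). This yields continuity of G at the boundary points
  (t0, 0), t0 \<noteq> 0, and the bound G <= 4c/f below the parabola (1 + 2|d|) v < t^2, which is
  the region v < |t|/nu(t) for nu(t) = (1 + 2|d|)/|t|; clearly 1/nu(t) \<rightarrow> 0.
  Since w exp(-f w^2) is bounded, the t-derivative of G is O(1/v^2). On the axis the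
  exponent is f d^2 v^(2n-2): for n = 1, G(0,v) is exactly c exp(-f d^2)/v, and for n > 1
  it differs from c/v by O(v^(2n-3)).
\<close>

lemma exp_neg_le_inverse:
  fixes s :: real
  assumes "0 < s"
  shows "exp (- s) \<le> 1 / s"
proof -
  have "s \<le> exp s"
    using exp_ge_add_one_self[of s] by linarith
  then show ?thesis
    using assms by (simp add: exp_minus divide_simps)
qed

lemma mult_exp_neg_square_le:
  fixes f w :: real
  assumes "0 \<le> f" "0 \<le> w"
  shows "2 * f * w * exp (- (f * w\<^sup>2)) \<le> f + 1"
proof -
  have "2 * f * w \<le> f + f * w\<^sup>2"
    using mult_left_mono[OF zero_le_power2[of "w - 1"] assms(1)]
    by (simp add: power2_eq_square algebra_simps)
  also have "\<dots> \<le> (f + 1) * (1 + f * w\<^sup>2)"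
    using assms by (simp add: algebra_simps)
  also have "\<dots> \<le> (f + 1) * exp (f * w\<^sup>2)"
    using assms by (intro mult_left_mono) auto
  finally show ?thesis
    by (simp add: exp_minus field_simps)
qed

lemma abs_add_powr_ge:
  fixes t d v n :: real
  assumes "0 \<le> v" "v \<le> 1" "1 \<le> n"
  shows "\<bar>t\<bar> - \<bar>d\<bar> * v \<le> \<bar>t + d * v powr n\<bar>"
proof -
  have "v powr n \<le> v powr 1"
    using assms by (intro powr_mono') auto
  also have "\<dots> = v"
    using assms by simp
  finally have "\<bar>d * v powr n\<bar> \<le> \<bar>d\<bar> * v"
    using assms by (simp add: abs_mult mult_left_mono)
  then show ?thesis
    by linarith
qed

lemma abs_add_lt_divide:
  fixes x e P K B :: real
  assumes "0 < P" "P \<le> 1" "\<bar>x\<bar> \<le> K / P" "\<bar>e\<bar> \<le> B"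
  shows "\<bar>x + e\<bar> < (K + B + 1) / P"
proof -
  have "B \<le> B / P" "0 < 1 / P"
    using assms by (auto simp: le_divide_eq mult_left_le)
  moreover have "(K + B + 1) / P = K / P + B / P + 1 / P"
    by (simp add: add_divide_distrib)
  ultimately show ?thesis
    using assms by linarith
qed

definition gauss :: "real \<Rightarrow> real \<Rightarrow> real \<Rightarrow> real \<Rightarrow> real \<times> real \<Rightarrow> real" where
  "gauss c f d n p =
     (if 0 < snd p then c / snd p * exp (- (f / (snd p)\<^sup>2) * (fst p + d * snd p powr n)\<^sup>2) else 0)"

definition gauss_dt :: "real \<Rightarrow> real \<Rightarrow> real \<Rightarrow> real \<Rightarrow> real \<times> real \<Rightarrow> real" where
  "gauss_dt c f d n p =
     (let t = fst p; v = snd p; y = t + d * v powr n in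
      - 2 * c * f * y / v ^ 3 * exp (- (f / v\<^sup>2) * y\<^sup>2))"

definition gauss_dv :: "real \<Rightarrow> real \<Rightarrow> real \<Rightarrow> real \<Rightarrow> real \<times> real \<Rightarrow> real" where
  "gauss_dv c f d n p =
     (let t = fst p; v = snd p; y = t + d * v powr n in
      c / v\<^sup>2 * exp (- (f / v\<^sup>2) * y\<^sup>2) * (2 * f * y * (y - d * n * v powr n) / v\<^sup>2 - 1))"

lemma chi_fun_eq_gauss_plus: "chi_fun c f d n \<eta> = (\<lambda>p. gauss c f d n p + \<eta> p)"
  by (simp add: fun_eq_iff chi_fun_def gauss_def Let_def)

lemma abs_gauss_le:
  assumes "0 \<le> c" "0 < f" "1 \<le> n" "0 \<le> v" "v \<le> 1" "0 < m" "m \<le> \<bar>t\<bar> - \<bar>d\<bar> * v"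
  shows "\<bar>gauss c f d n (t, v)\<bar> \<le> c * v / (f * m\<^sup>2)"
proof (cases "v = 0")
  case False
  then have "0 < v"
    using assms by simp
  define s where "s = f / v\<^sup>2 * m\<^sup>2"
  have "0 < s"
    using assms \<open>0 < v\<close> by (simp add: s_def)
  have "m \<le> \<bar>t + d * v powr n\<bar>"
    using abs_add_powr_ge[of v n t d] assms by linarith
  then have "m\<^sup>2 \<le> (t + d * v powr n)\<^sup>2"
    using assms power_mono[of m "\<bar>t + d * v powr n\<bar>" 2] by simp
  then have "s \<le> f / v\<^sup>2 * (t + d * v powr n)\<^sup>2"
    unfolding s_def using assms by (intro mult_left_mono) auto
  then have "exp (- (f / v\<^sup>2) * (t + d * v powr n)\<^sup>2) \<le> exp (- s)"
    by simp
  also have "\<dots> \<le> 1 / s"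
    using exp_neg_le_inverse[OF \<open>0 < s\<close>] .
  finally have "c / v * exp (- (f / v\<^sup>2) * (t + d * v powr n)\<^sup>2) \<le> c / v * (1 / s)"
    using assms by (intro mult_left_mono) auto
  then have "gauss c f d n (t, v) \<le> c / v * (1 / s)"
    using \<open>0 < v\<close> by (simp add: gauss_def)
  also have "\<dots> = c * v / (f * m\<^sup>2)"
    using assms \<open>0 < v\<close> by (simp add: s_def field_simps power2_eq_square)
  finally show ?thesis
    using assms \<open>0 < v\<close> by (simp add: gauss_def)
qed (simp add: gauss_def)

lemma has_derivative_gauss:
  assumes "0 < snd p"
  shows "(gauss c f d n has_derivative
           (\<lambda>h. fst h * gauss_dt c f d n p + snd h * gauss_dv c f d n p)) (at p)"
proof -
  have "((\<lambda>q. c / snd q * exp (- (f / (snd q)\<^sup>2) * (fst q + d * snd q powr n)\<^sup>2)) has_derivative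
           (\<lambda>h. fst h * gauss_dt c f d n p + snd h * gauss_dv c f d n p)) (at p)"
    using assms
    by (auto intro!: derivative_eq_intros simp: fun_eq_iff gauss_dt_def gauss_dv_def Let_def)
      (simp add: field_simps, algebra)
  moreover have "open {q :: real \<times> real. 0 < snd q}"
    by (intro open_Collect_less continuous_intros)
  ultimately show ?thesis
    by (rule has_derivative_transform_within_open) (use assms in \<open>auto simp: gauss_def\<close>)
qed

lemma continuous_on_gauss_dt: "continuous_on {p. 0 < snd p} (gauss_dt c f d n)"
  unfolding gauss_dt_def Let_def by (intro continuous_intros) auto

lemma continuous_on_gauss_dv: "continuous_on {p. 0 < snd p} (gauss_dv c f d n)"
  unfolding gauss_dv_def Let_def by (intro continuous_intros) auto

lemma gauss_tendsto_zero_at_boundary: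
  assumes "0 \<le> c" "0 < f" "1 \<le> n" "t0 \<noteq> 0"
  shows "(gauss c f d n \<longlongrightarrow> 0) (at (t0, 0) within H2)"
proof -
  define r where "r = min 1 (\<bar>t0\<bar> / (4 * (\<bar>d\<bar> + 1)))"
  have "0 < r" "r \<le> 1"
    using assms by (auto simp: r_def add_nonneg_pos)
  have "r \<le> \<bar>t0\<bar> / (4 * (\<bar>d\<bar> + 1))"
    by (simp add: r_def)
  then have "(\<bar>d\<bar> + 1) * r \<le> \<bar>t0\<bar> / 4"
    by (simp add: field_simps add_nonneg_pos)
  have "\<forall>\<^sub>F q in at (t0, 0) within H2. norm (gauss c f d n q) \<le> 4 * c / (f * t0\<^sup>2) * snd q"
    unfolding eventually_at
  proof (intro exI[of _ r] conjI ballI impI \<open>0 < r\<close>)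
    fix q assume q: "q \<in> H2" "q \<noteq> (t0, 0) \<and> dist q (t0, 0) < r"
    obtain t v where q_eq: "q = (t, v)"
      by fastforce
    have "0 \<le> v" "\<bar>t - t0\<bar> < r" "v < r"
      using q dist_fst_le[of q "(t0, 0)"] dist_snd_le[of q "(t0, 0)"]
      by (auto simp: q_eq H2_def dist_real_def)
    moreover have "\<bar>d\<bar> * v \<le> (\<bar>d\<bar> + 1) * r"
      using \<open>0 \<le> v\<close> \<open>v < r\<close> by (intro mult_mono) auto
    moreover have "r \<le> (\<bar>d\<bar> + 1) * r"
      using \<open>0 < r\<close> by simp
    ultimately have "\<bar>t0\<bar> / 2 \<le> \<bar>t\<bar> - \<bar>d\<bar> * v" "v \<le> 1"
      using \<open>r \<le> 1\<close> \<open>(\<bar>d\<bar> + 1) * r \<le> \<bar>t0\<bar> / 4\<close> by arith+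
    then have "\<bar>gauss c f d n (t, v)\<bar> \<le> c * v / (f * (\<bar>t0\<bar> / 2)\<^sup>2)"
      using assms \<open>0 \<le> v\<close> by (intro abs_gauss_le) auto
    then show "norm (gauss c f d n q) \<le> 4 * c / (f * t0\<^sup>2) * snd q"
      by (simp add: q_eq power_divide field_simps)
  qed
  moreover have "((\<lambda>q. 4 * c / (f * t0\<^sup>2) * snd q) \<longlongrightarrow> 4 * c / (f * t0\<^sup>2) * snd (t0, 0))
      (at (t0, 0) within H2)"
    by (intro tendsto_intros)
  then have "((\<lambda>q. 4 * c / (f * t0\<^sup>2) * snd q) \<longlongrightarrow> 0) (at (t0, 0) within H2)"
    by simp
  ultimately show ?thesis
    by (rule Lim_null_comparison)
qed

lemma continuous_on_gauss:
  assumes "0 \<le> c" "0 < f" "1 \<le> n"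
  shows "continuous_on (H2 - {(0, 0)}) (gauss c f d n)"
  unfolding continuous_on_eq_continuous_within
proof
  fix p assume p: "p \<in> H2 - {(0, 0)}"
  show "continuous (at p within H2 - {(0, 0)}) (gauss c f d n)"
  proof (cases "0 < snd p")
    case True
    then show ?thesis
      using has_derivative_continuous[OF has_derivative_gauss] continuous_at_imp_continuous_at_within
      by blast
  next
    case False
    then obtain t0 where p_eq: "p = (t0, 0)" and "t0 \<noteq> 0"
      using p by (cases p) (auto simp: H2_def)
    then have "(gauss c f d n \<longlongrightarrow> 0) (at p within H2)"
      using gauss_tendsto_zero_at_boundary[OF assms] by simp
    then have "(gauss c f d n \<longlongrightarrow> 0) (at p within H2 - {(0, 0)})"
      by (rule tendsto_within_subset) auto
    then show ?thesis
      by (simp add: continuous_within p_eq gauss_def)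
  qed
qed

lemma abs_gauss_dt_le:
  assumes "0 \<le> c" "0 \<le> f" "0 < v"
  shows "\<bar>gauss_dt c f d n (t, v)\<bar> \<le> c * (f + 1) / v\<^sup>2"
proof -
  define y where "y = t + d * v powr n"
  define w where "w = \<bar>y\<bar> / v"
  have "f / v\<^sup>2 * y\<^sup>2 = f * w\<^sup>2"
    by (simp add: w_def power_divide)
  then have "\<bar>gauss_dt c f d n (t, v)\<bar> = c / v\<^sup>2 * (2 * f * w * exp (- (f * w\<^sup>2)))"
    using assms by (simp add: gauss_dt_def Let_def flip: y_def)
      (simp add: w_def abs_mult power2_eq_square power3_eq_cube field_simps)
  also have "\<dots> \<le> c / v\<^sup>2 * (f + 1)"
    using assms mult_exp_neg_square_le[of f w] by (intro mult_left_mono) (auto simp: w_def)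
  finally show ?thesis
    by simp
qed

lemma gauss_on_axis:
  assumes "0 < v"
  shows "gauss c f d n (0, v) = c / v * exp (- (f * d\<^sup>2) * v powr (2 * n - 2))"
proof -
  have "(v powr n)\<^sup>2 / v\<^sup>2 = v powr (2 * n - 2)"
    using assms by (simp add: power2_eq_square powr_diff powr_add flip: powr_add)
  then show ?thesis
    using assms by (simp add: gauss_def power_mult_distrib field_simps)
qed

lemma abs_gauss_on_axis_sub_le:
  assumes "0 \<le> c" "0 \<le> f" "0 < v"
  shows "\<bar>gauss c f d n (0, v) - c / v\<bar> \<le> c * f * d\<^sup>2 * v powr (2 * n - 3)"
proof -
  define a where "a = f * d\<^sup>2 * v powr (2 * n - 2)"
  have "0 \<le> a" "0 \<le> c / v"
    using assms by (simp_all add: a_def)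
  have "0 \<le> c / v * (1 - exp (- a))"
    using \<open>0 \<le> a\<close> \<open>0 \<le> c / v\<close> by (intro mult_nonneg_nonneg) auto
  then have "\<bar>c / v * exp (- a) - c / v\<bar> = c / v * (1 - exp (- a))"
    by (subst abs_minus_commute) (simp add: right_diff_distrib)
  also have "\<dots> \<le> c / v * a"
    using exp_ge_add_one_self[of "- a"] \<open>0 \<le> c / v\<close> by (intro mult_left_mono) auto
  also have "\<dots> = c * f * d\<^sup>2 * v powr (2 * n - 3)"
    using assms by (simp add: a_def powr_diff field_simps power2_eq_square power3_eq_cube)
  finally show ?thesis
    using assms by (simp add: gauss_on_axis a_def)
qed

lemma gauss_axis_asymptotics:
  assumes "0 < c" "0 \<le> f" "1 \<le> n"
  obtains c' K \<epsilon> where "0 < c'" "0 \<le> K" "0 < \<epsilon>" "\<epsilon> \<le> 1"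
    "\<And>v. 0 < v \<Longrightarrow> v < 1 \<Longrightarrow> \<bar>gauss c f d n (0, v) - c' / v\<bar> \<le> K / v powr (1 - \<epsilon>)"
proof (cases "n = 1")
  case True
  show ?thesis
    by (rule that[of "c * exp (- (f * d\<^sup>2))" 0 1]) (use assms True in \<open>auto simp: gauss_on_axis\<close>)
next
  case False
  define \<epsilon> where "\<epsilon> = min 1 (2 * n - 2)"
  have "0 < \<epsilon>" "\<epsilon> \<le> 1" "\<epsilon> - 1 \<le> 2 * n - 3"
    using assms False by (auto simp: \<epsilon>_def)
  have "\<bar>gauss c f d n (0, v) - c / v\<bar> \<le> c * f * d\<^sup>2 / v powr (1 - \<epsilon>)" if "0 < v" "v < 1" for v
  proof -
    have "v powr (2 * n - 3) \<le> v powr (\<epsilon> - 1)"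
      using that \<open>\<epsilon> - 1 \<le> 2 * n - 3\<close> by (intro powr_mono') auto
    also have "\<dots> = 1 / v powr (1 - \<epsilon>)"
      using powr_minus_divide[of v "1 - \<epsilon>"] by simp
    finally have "c * f * d\<^sup>2 * v powr (2 * n - 3) \<le> c * f * d\<^sup>2 * (1 / v powr (1 - \<epsilon>))"
      using assms by (intro mult_left_mono) auto
    then show ?thesis
      using abs_gauss_on_axis_sub_le[of c f v d n] assms that by simp
  qed
  then show ?thesis
    using that[of c "c * f * d\<^sup>2" \<epsilon>] assms \<open>0 < \<epsilon>\<close> \<open>\<epsilon> \<le> 1\<close> by auto
qed

lemma chi_fun_axis_asymptotics:
  assumes "0 < c" "0 \<le> f" "1 \<le> n" "0 \<le> B"
  obtains c' K \<epsilon> where "0 < c'" "0 < K" "0 < \<epsilon>"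
    "\<And>v. 0 < v \<Longrightarrow> v < 1 \<Longrightarrow> \<bar>\<eta> (0, v)\<bar> \<le> B \<Longrightarrow>
      \<bar>chi_fun c f d n \<eta> (0, v) - c' / v\<bar> < K / v powr (1 - \<epsilon>)"
proof -
  obtain c' K \<epsilon> where "0 < c'" "0 \<le> K" "0 < \<epsilon>" "\<epsilon> \<le> 1" and gauss_axis:
    "\<And>v. 0 < v \<Longrightarrow> v < 1 \<Longrightarrow> \<bar>gauss c f d n (0, v) - c' / v\<bar> \<le> K / v powr (1 - \<epsilon>)"
    using gauss_axis_asymptotics[of c f n d] assms by auto
  have chi_axis: "\<bar>chi_fun c f d n \<eta> (0, v) - c' / v\<bar> < (K + B + 1) / v powr (1 - \<epsilon>)"
    if "0 < v" "v < 1" "\<bar>\<eta> (0, v)\<bar> \<le> B" for v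
  proof -
    have "chi_fun c f d n \<eta> (0, v) - c' / v = (gauss c f d n (0, v) - c' / v) + \<eta> (0, v)"
      by (simp add: chi_fun_eq_gauss_plus)
    also have "\<bar>\<dots>\<bar> < (K + B + 1) / v powr (1 - \<epsilon>)"
      using that \<open>\<epsilon> \<le> 1\<close> gauss_axis by (intro abs_add_lt_divide) (auto intro: powr_le1)
    finally show ?thesis .
  qed
  have "0 < K + B + 1"
    using assms \<open>0 \<le> K\<close> by simp
  then show ?thesis
    using that[OF \<open>0 < c'\<close> _ \<open>0 < \<epsilon>\<close> chi_axis] by blast
qed

lemma abs_gauss_le_below_parabola:
  assumes "0 \<le> c" "0 < f" "1 \<le> n" "\<bar>t\<bar> \<le> 1" "0 \<le> v" "(1 + 2 * \<bar>d\<bar>) * v < t\<^sup>2"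
  shows "\<bar>gauss c f d n (t, v)\<bar> \<le> 4 * c / f"
proof -
  have "v \<le> (1 + 2 * \<bar>d\<bar>) * v" "2 * \<bar>d\<bar> * v \<le> (1 + 2 * \<bar>d\<bar>) * v"
    using assms by (simp_all add: algebra_simps)
  moreover have "t\<^sup>2 \<le> \<bar>t\<bar>"
  proof -
    have "t\<^sup>2 = \<bar>t\<bar> * \<bar>t\<bar>"
      by (simp add: power2_eq_square)
    also have "\<dots> \<le> \<bar>t\<bar>"
      using assms by (intro mult_left_le) auto
    finally show ?thesis .
  qed
  ultimately have v: "v \<le> t\<^sup>2" "\<bar>d\<bar> * v \<le> \<bar>t\<bar> / 2" "v \<le> 1" and "0 < t\<^sup>2"
    using assms by linarith+
  then have "t \<noteq> 0" "v / t\<^sup>2 \<le> 1"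
    by auto
  with v have "\<bar>gauss c f d n (t, v)\<bar> \<le> c * v / (f * (\<bar>t\<bar> / 2)\<^sup>2)"
    using assms by (intro abs_gauss_le) auto
  also have "\<dots> = 4 * c / f * (v / t\<^sup>2)"
    by (simp add: power_divide field_simps)
  also have "\<dots> \<le> 4 * c / f"
    using assms \<open>v / t\<^sup>2 \<le> 1\<close> by (intro mult_left_le) auto
  finally show ?thesis .
qed

lemma abs_fst_snd_less_of_mem_unit_ball:
  fixes p :: "real \<times> real"
  assumes "p \<in> ball (0, 0) 1"
  shows "\<bar>fst p\<bar> < 1" "\<bar>snd p\<bar> < 1"
proof -
  have "norm p < 1"
    using assms by (simp add: dist_norm flip: zero_prod_def)
  then show "\<bar>fst p\<bar> < 1" "\<bar>snd p\<bar> < 1"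
    using norm_fst_le[of "fst p" "snd p"] norm_snd_le[of "snd p" "fst p"] by auto
qed

lemma has_derivative_at_upper_half_plane:
  assumes "open W" "p \<in> W" "0 < snd p" "(g has_derivative D) (at p within W \<inter> H2)"
  shows "(g has_derivative D) (at p)"
proof -
  have "(g has_derivative D) (at p within W \<inter> {q. 0 < snd q})"
    using assms(4) by (rule has_derivative_subset) (auto simp: H2_def)
  moreover have "open (W \<inter> {q :: real \<times> real. 0 < snd q})"
    by (intro open_Int assms open_Collect_less continuous_intros)
  ultimately show ?thesis
    using assms at_within_open[of p "W \<inter> {q. 0 < snd q}"] by simp
qed

lemma continuous_on_chi_fun:
  assumes "0 \<le> c" "0 < f" "1 \<le> n" "continuous_on S \<eta>" "S \<subseteq> H2"
  shows "continuous_on (S - {(0, 0)}) (chi_fun c f d n \<eta>)"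
proof -
  have "continuous_on (S - {(0, 0)}) (gauss c f d n)"
    using assms by (intro continuous_on_subset[OF continuous_on_gauss]) auto
  moreover have "continuous_on (S - {(0, 0)}) \<eta>"
    using assms(4) by (rule continuous_on_subset) auto
  ultimately show ?thesis
    unfolding chi_fun_eq_gauss_plus by (rule continuous_on_add)
qed

lemma has_derivative_chi_fun:
  assumes "open W" "p \<in> W" "0 < snd p"
    and "(\<eta> has_derivative (\<lambda>h. fst h * Et + snd h * Ev)) (at p within W \<inter> H2)"
  shows "(chi_fun c f d n \<eta> has_derivative
           (\<lambda>h. fst h * (gauss_dt c f d n p + Et) + snd h * (gauss_dv c f d n p + Ev))) (at p)"
proof -
  have "(\<eta> has_derivative (\<lambda>h. fst h * Et + snd h * Ev)) (at p)"
    using has_derivative_at_upper_half_plane assms by blast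
  from has_derivative_add[OF has_derivative_gauss[OF assms(3)] this]
  show ?thesis
    unfolding chi_fun_eq_gauss_plus by (simp add: algebra_simps)
qed

lemma Psi1_nu_chi_fun:
  fixes \<eta> Et Ev :: "real \<times> real \<Rightarrow> real"
  assumes "0 < c" "0 < f" "1 \<le> n" "0 \<le> B" "open W" "W \<subseteq> ball (0, 0) 1"
    and \<eta>_deriv: "\<And>p. p \<in> W \<inter> H2 \<Longrightarrow>
      (\<eta> has_derivative (\<lambda>h. fst h * Et p + snd h * Ev p)) (at p within W \<inter> H2)"
    and "continuous_on (W \<inter> H2) Et" "continuous_on (W \<inter> H2) Ev"
    and \<eta>_bounded: "\<And>p. p \<in> W \<inter> H2 \<Longrightarrow> \<bar>\<eta> p\<bar> \<le> B \<and> \<bar>Et p\<bar> \<le> B"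
  shows "Psi1_nu (4 * c / f + B + 1) (W \<inter> H2) (\<lambda>t. (1 + 2 * \<bar>d\<bar>) / \<bar>t\<bar>) (chi_fun c f d n \<eta>)"
proof -
  define Us where "Us = W \<inter> H2 - {(0, 0)}"
  define Dt where "Dt p = gauss_dt c f d n p + Et p" for p
  define Dv where "Dv p = gauss_dv c f d n p + Ev p" for p
  have in_Us: "\<bar>fst p\<bar> < 1 \<and> 0 \<le> snd p \<and> snd p < 1 \<and> p \<in> W \<inter> H2" if "p \<in> Us" for p
    using that abs_fst_snd_less_of_mem_unit_ball[of p] assms(6) by (auto simp: Us_def H2_def)
  have "continuous_on (W \<inter> H2) \<eta>"
    unfolding continuous_on_eq_continuous_within using \<eta>_deriv has_derivative_continuous by blast
  then have continuous: "continuous_on Us (chi_fun c f d n \<eta>)"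
    unfolding Us_def using assms by (intro continuous_on_chi_fun) (auto simp: H2_def)
  have deriv: "(chi_fun c f d n \<eta> has_derivative (\<lambda>h. fst h * Dt p + snd h * Dv p)) (at p)"
    if "p \<in> Us" "snd p \<noteq> 0" for p
    unfolding Dt_def Dv_def using in_Us[OF that(1)] that(2)
    by (intro has_derivative_chi_fun[OF assms(5)] \<eta>_deriv) auto
  have "{p \<in> Us. snd p \<noteq> 0} \<subseteq> W \<inter> H2 \<inter> {p. 0 < snd p}"
    using in_Us by fastforce
  then have Dt_cont: "continuous_on {p \<in> Us. snd p \<noteq> 0} Dt"
    and Dv_cont: "continuous_on {p \<in> Us. snd p \<noteq> 0} Dv"
    unfolding Dt_def Dv_def using assms
    by (auto intro!: continuous_on_add continuous_on_subset[OF continuous_on_gauss_dt]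
        continuous_on_subset[OF continuous_on_gauss_dv] intro: continuous_on_subset)
  obtain c' K1 \<epsilon> where "0 < c'" "0 < K1" "0 < \<epsilon>" and axis:
    "\<And>v. 0 < v \<Longrightarrow> v < 1 \<Longrightarrow> \<bar>\<eta> (0, v)\<bar> \<le> B \<Longrightarrow>
      \<bar>chi_fun c f d n \<eta> (0, v) - c' / v\<bar> < K1 / v powr (1 - \<epsilon>)"
    using chi_fun_axis_asymptotics[where \<eta> = \<eta> and d = d,
        OF \<open>0 < c\<close> less_imp_le[OF \<open>0 < f\<close>] \<open>1 \<le> n\<close> \<open>0 \<le> B\<close>] by blast
  have axis_chi: "\<bar>chi_fun c f d n \<eta> (0, v) - c' / v\<bar> < K1 / v powr (1 - \<epsilon>)"
    if "(0, v) \<in> Us" "v \<noteq> 0" for v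
    using in_Us[OF that(1)] that(2) \<eta>_bounded by (intro axis) auto
  have slope: "\<bar>Dt (t, v)\<bar> < (c * (f + 1) + B + 1) / v\<^sup>2" if "(t, v) \<in> Us" "v \<noteq> 0" for t v
  proof -
    have "0 < v" "v < 1" "(t, v) \<in> W \<inter> H2"
      using in_Us[OF that(1)] that(2) by auto
    then show ?thesis
      unfolding Dt_def using assms abs_gauss_dt_le \<eta>_bounded
      by (intro abs_add_lt_divide) (auto simp: power_le_one)
  qed
  have bounded: "\<bar>chi_fun c f d n \<eta> (t, v)\<bar> \<le> 4 * c / f + B + 1"
    if "(t, v) \<in> Us" "t \<noteq> 0" "0 \<le> v" "v < \<bar>t\<bar> / ((1 + 2 * \<bar>d\<bar>) / \<bar>t\<bar>)" for t v
  proof -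
    have "(1 + 2 * \<bar>d\<bar>) * v < t\<^sup>2"
      using that(2,4) by (simp add: field_simps power2_eq_square add_pos_nonneg)
    then have "\<bar>gauss c f d n (t, v)\<bar> \<le> 4 * c / f"
      using in_Us[OF that(1)] assms by (intro abs_gauss_le_below_parabola) auto
    then show ?thesis
      using in_Us[OF that(1)] \<eta>_bounded by (fastforce simp: chi_fun_eq_gauss_plus)
  qed
  have nu_pos: "0 < (1 + 2 * \<bar>d\<bar>) / \<bar>t\<bar>" if "t \<noteq> 0" for t :: real
    using that by (simp add: add_pos_nonneg)
  have "0 < c * (f + 1) + B + 1"
    using assms by (auto intro: add_nonneg_pos)
  then show ?thesis
    unfolding Psi1_nu_def Let_def Us_def[symmetric]
    using continuous deriv Dt_cont Dv_cont \<open>0 < c'\<close> \<open>0 < K1\<close> \<open>0 < \<epsilon>\<close> axis_chi slope bounded nu_pos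
    by blast
qed

theorem lemma2:
  fixes c f d n :: real and \<eta> :: "real \<times> real \<Rightarrow> real"
  assumes "c > 0" and "f > 0" and "n \<ge> 1"
    and eta: "\<exists>W Et Ev B. open W \<and> (0,0) \<in> W \<and>
       (\<forall>p\<in>W \<inter> H2. (\<eta> has_derivative (\<lambda>h. fst h * Et p + snd h * Ev p)) (at p within W \<inter> H2)) \<and>
       continuous_on (W \<inter> H2) Et \<and> continuous_on (W \<inter> H2) Ev \<and>
       (\<forall>p\<in>W \<inter> H2. \<bar>\<eta> p\<bar> \<le> B \<and> \<bar>Et p\<bar> \<le> B)"
  shows "\<exists>\<omega> > 0. \<exists>W \<nu>. open W \<and> (0,0) \<in> W \<and>
           Psi1_nu \<omega> (W \<inter> H2) \<nu> (chi_fun c f d n \<eta>) \<and>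
           ((\<lambda>t. inverse (\<nu> t)) \<longlongrightarrow> 0) (at 0)"
proof -
  obtain W0 Et Ev B where "open W0" "(0, 0) \<in> W0"
    and deriv: "\<forall>p\<in>W0 \<inter> H2. (\<eta> has_derivative (\<lambda>h. fst h * Et p + snd h * Ev p)) (at p within W0 \<inter> H2)"
    and "continuous_on (W0 \<inter> H2) Et" "continuous_on (W0 \<inter> H2) Ev"
    and bounded: "\<forall>p\<in>W0 \<inter> H2. \<bar>\<eta> p\<bar> \<le> B \<and> \<bar>Et p\<bar> \<le> B"
    using eta by blast
  define W where "W = W0 \<inter> ball (0, 0) 1"
  have "open W" "(0, 0) \<in> W" "W \<inter> H2 \<subseteq> W0 \<inter> H2"
    using \<open>open W0\<close> \<open>(0, 0) \<in> W0\<close> by (auto simp: W_def)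
  have "0 \<le> B"
    using bounded \<open>(0, 0) \<in> W0\<close> by (force simp: H2_def)
  have "Psi1_nu (4 * c / f + B + 1) (W \<inter> H2) (\<lambda>t. (1 + 2 * \<bar>d\<bar>) / \<bar>t\<bar>) (chi_fun c f d n \<eta>)"
  proof (rule Psi1_nu_chi_fun)
    show "(\<eta> has_derivative (\<lambda>h. fst h * Et p + snd h * Ev p)) (at p within W \<inter> H2)"
      if "p \<in> W \<inter> H2" for p
      using deriv that \<open>W \<inter> H2 \<subseteq> W0 \<inter> H2\<close> by (blast intro: has_derivative_subset)
  qed (use assms \<open>0 \<le> B\<close> \<open>open W\<close> \<open>W \<inter> H2 \<subseteq> W0 \<inter> H2\<close> bounded
        \<open>continuous_on (W0 \<inter> H2) Et\<close> \<open>continuous_on (W0 \<inter> H2) Ev\<close>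
        in \<open>auto simp: W_def intro: continuous_on_subset\<close>)
  moreover have "((\<lambda>t. \<bar>t\<bar> / (1 + 2 * \<bar>d\<bar>)) \<longlongrightarrow> \<bar>0\<bar> / (1 + 2 * \<bar>d\<bar>)) (at (0 :: real))"
    by (intro tendsto_intros) (simp add: add_pos_nonneg)
  moreover have "0 < 4 * c / f + B + 1"
    using assms \<open>0 \<le> B\<close> by (simp add: add_nonneg_pos)
  ultimately show ?thesis
    using \<open>open W\<close> \<open>(0, 0) \<in> W\<close> by (fastforce simp: inverse_eq_divide)
qed

end
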